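(* Let $(X_0,X_1)$ be an optimal interpolation pair and $0<\theta<1$, with $\Omega_\theta$ the canonical differential. If $g$ is an operator on $X_0+X_1$ which restricts to a contraction of $X_0$ and of $X_1$ and restricts to an isometric embedding of $X_\theta$, then $g\Omega_\theta x=\Omega_\theta gx$ for all $x\in X_\theta$. In particular $\Omega_\theta$ is $G$-equivariant for the group $G$ of operators acting as surjective isometries on both $X_0$ and $X_1$.
   Context: Regular interpolation pair, strip $\mathbb S=\{0<\mathrm{Re}z<1\}$, Calderón space $\mathscr C$ (bounded continuous $F:\overline{\mathbb S}\to X_0+X_1$ analytic inside, with $F(k+i\cdot)$ bounded continuous into $X_k$, norm $\sup_{k,t}\|F(k+it)\|_{X_k}$), and $X_\theta=\{F(\theta)\}$ with the quotient norm, as usual. The pair is optimal if for every $0<\theta<1$ and every $x\in X_\theta$ there is a unique minimal function $B_\theta x$ in the Calderón space (in the variant where boundary continuity is replaced by essential boundedness) with $(B_\theta x)(\theta)=x$ and $\|B_\theta x\|=\|x\|_\theta$. The canonical differential is then $\Omega_\theta x=(B_\theta x)'(\theta)\in X_0+X_1$. *)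

theory Defs
  imports "HOL-Analysis.Analysis"
begin

text \<open>Complex structure on an ambient real normed space: J is multiplication by i.\<close>

definition cscale :: "('a::real_vector \<Rightarrow> 'a) \<Rightarrow> complex \<Rightarrow> 'a \<Rightarrow> 'a" where
  "cscale J c x = Re c *\<^sub>R x + Im c *\<^sub>R J x"

definition complex_structure :: "('a::real_vector \<Rightarrow> 'a) \<Rightarrow> bool" where
  "complex_structure J \<longleftrightarrow> linear J \<and> (\<forall>x. J (J x) = - x)"

definition complex_subspace :: "('a::real_vector \<Rightarrow> 'a) \<Rightarrow> 'a set \<Rightarrow> bool" where
  "complex_subspace J X \<longleftrightarrow> 0 \<in> X \<and> (\<forall>x\<in>X. \<forall>y\<in>X. x + y \<in> X)
     \<and> (\<forall>c. \<forall>x\<in>X. cscale J c x \<in> X)"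

definition complex_norm_on :: "('a::real_vector \<Rightarrow> 'a) \<Rightarrow> 'a set \<Rightarrow> ('a \<Rightarrow> real) \<Rightarrow> bool" where
  "complex_norm_on J X n \<longleftrightarrow>
     (\<forall>x\<in>X. 0 \<le> n x) \<and> (\<forall>x\<in>X. n x = 0 \<longleftrightarrow> x = 0)
     \<and> (\<forall>x\<in>X. \<forall>y\<in>X. n (x + y) \<le> n x + n y)
     \<and> (\<forall>c. \<forall>x\<in>X. n (cscale J c x) = cmod c * n x)"

definition complete_wrt :: "'a::real_vector set \<Rightarrow> ('a \<Rightarrow> real) \<Rightarrow> bool" where
  "complete_wrt X n \<longleftrightarrow>
     (\<forall>f::nat \<Rightarrow> 'a. (\<forall>k. f k \<in> X) \<and> (\<forall>e>0. \<exists>N. \<forall>p\<ge>N. \<forall>q\<ge>N. n (f p - f q) < e)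
        \<longrightarrow> (\<exists>l\<in>X. \<forall>e>0. \<exists>N. \<forall>p\<ge>N. n (f p - l) < e))"

definition dense_wrt :: "'a::real_vector set \<Rightarrow> 'a set \<Rightarrow> ('a \<Rightarrow> real) \<Rightarrow> bool" where
  "dense_wrt D X n \<longleftrightarrow> (\<forall>x\<in>X. \<forall>e>0. \<exists>d\<in>D. n (x - d) < e)"

text \<open>A (compatible, complex Banach) interpolation pair, modelled inside the ambient space
  X0 + X1 (the type 'a), whose norm is the sum norm.  Regularity: X0 \<inter> X1 dense in both.\<close>

definition regular_interpolation_pair ::
  "('a::real_normed_vector \<Rightarrow> 'a) \<Rightarrow> 'a set \<Rightarrow> ('a \<Rightarrow> real) \<Rightarrow> 'a set \<Rightarrow> ('a \<Rightarrow> real) \<Rightarrow> bool" where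
  "regular_interpolation_pair J X0 n0 X1 n1 \<longleftrightarrow>
     complex_structure J
     \<and> complex_subspace J X0 \<and> complex_subspace J X1
     \<and> complex_norm_on J X0 n0 \<and> complex_norm_on J X1 n1
     \<and> complete_wrt X0 n0 \<and> complete_wrt X1 n1
     \<and> (\<forall>x. \<exists>a\<in>X0. \<exists>b\<in>X1. a + b = x)
     \<and> (\<forall>x. norm x = Inf {n0 a + n1 b | a b. a \<in> X0 \<and> b \<in> X1 \<and> a + b = x})
     \<and> dense_wrt (X0 \<inter> X1) X0 n0 \<and> dense_wrt (X0 \<inter> X1) X1 n1"

definition strip :: "complex set" where
  "strip = {z. 0 < Re z \<and> Re z < 1}"

definition cstrip :: "complex set" where
  "cstrip = {z. 0 \<le> Re z \<and> Re z \<le> 1}"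

definition has_cderiv :: "('a::real_normed_vector \<Rightarrow> 'a) \<Rightarrow> (complex \<Rightarrow> 'a) \<Rightarrow> 'a \<Rightarrow> complex \<Rightarrow> bool" where
  "has_cderiv J F v z \<longleftrightarrow> (F has_derivative (\<lambda>h. cscale J h v)) (at z)"

definition canalytic_on :: "('a::real_normed_vector \<Rightarrow> 'a) \<Rightarrow> (complex \<Rightarrow> 'a) \<Rightarrow> complex set \<Rightarrow> bool" where
  "canalytic_on J F S \<longleftrightarrow> (\<forall>z\<in>S. \<exists>v. has_cderiv J F v z)"

text \<open>Common part of both Calder\'on spaces. Functions are taken to vanish off the closed strip
  so that they are determined by their values on the closed strip.\<close>

definition calderon_base :: "('a::real_normed_vector \<Rightarrow> 'a) \<Rightarrow> (complex \<Rightarrow> 'a) \<Rightarrow> bool" where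
  "calderon_base J F \<longleftrightarrow> bounded (F ` cstrip) \<and> continuous_on cstrip F
     \<and> canalytic_on J F strip \<and> (\<forall>z. z \<notin> cstrip \<longrightarrow> F z = 0)"

definition bdry_cont_bdd :: "'a::real_normed_vector set \<Rightarrow> ('a \<Rightarrow> real) \<Rightarrow> (real \<Rightarrow> 'a) \<Rightarrow> bool" where
  "bdry_cont_bdd X n f \<longleftrightarrow> (\<forall>t. f t \<in> X) \<and> (\<exists>M. \<forall>t. n (f t) \<le> M)
     \<and> (\<forall>t. \<forall>e>0. \<exists>d>0. \<forall>s. \<bar>s - t\<bar> < d \<longrightarrow> n (f s - f t) < e)"

definition calderon ::
  "('a::real_normed_vector \<Rightarrow> 'a) \<Rightarrow> 'a set \<Rightarrow> ('a \<Rightarrow> real) \<Rightarrow> 'a set \<Rightarrow> ('a \<Rightarrow> real) \<Rightarrow> (complex \<Rightarrow> 'a) set" where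
  "calderon J X0 n0 X1 n1 = {F. calderon_base J F
     \<and> bdry_cont_bdd X0 n0 (\<lambda>t. F (Complex 0 t)) \<and> bdry_cont_bdd X1 n1 (\<lambda>t. F (Complex 1 t))}"

definition calderon_norm :: "('a \<Rightarrow> real) \<Rightarrow> ('a \<Rightarrow> real) \<Rightarrow> (complex \<Rightarrow> 'a) \<Rightarrow> real" where
  "calderon_norm n0 n1 F = max (SUP t. n0 (F (Complex 0 t))) (SUP t. n1 (F (Complex 1 t)))"

definition bdry_ess_bdd :: "'a set \<Rightarrow> ('a \<Rightarrow> real) \<Rightarrow> (real \<Rightarrow> 'a) \<Rightarrow> real \<Rightarrow> bool" where
  "bdry_ess_bdd X n f M \<longleftrightarrow> (AE t in lborel. f t \<in> X \<and> n (f t) \<le> M)"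

definition ess_bdry_norm :: "'a set \<Rightarrow> ('a \<Rightarrow> real) \<Rightarrow> (real \<Rightarrow> 'a) \<Rightarrow> real" where
  "ess_bdry_norm X n f = Inf {M. bdry_ess_bdd X n f M}"

definition calderon_ess ::
  "('a::real_normed_vector \<Rightarrow> 'a) \<Rightarrow> 'a set \<Rightarrow> ('a \<Rightarrow> real) \<Rightarrow> 'a set \<Rightarrow> ('a \<Rightarrow> real) \<Rightarrow> (complex \<Rightarrow> 'a) set" where
  "calderon_ess J X0 n0 X1 n1 = {F. calderon_base J F
     \<and> (\<exists>M. bdry_ess_bdd X0 n0 (\<lambda>t. F (Complex 0 t)) M)
     \<and> (\<exists>M. bdry_ess_bdd X1 n1 (\<lambda>t. F (Complex 1 t)) M)}"

definition calderon_ess_norm :: "'a set \<Rightarrow> ('a \<Rightarrow> real) \<Rightarrow> 'a set \<Rightarrow> ('a \<Rightarrow> real) \<Rightarrow> (complex \<Rightarrow> 'a) \<Rightarrow> real" where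
  "calderon_ess_norm X0 n0 X1 n1 F =
     max (ess_bdry_norm X0 n0 (\<lambda>t. F (Complex 0 t))) (ess_bdry_norm X1 n1 (\<lambda>t. F (Complex 1 t)))"

definition interp_space ::
  "('a::real_normed_vector \<Rightarrow> 'a) \<Rightarrow> 'a set \<Rightarrow> ('a \<Rightarrow> real) \<Rightarrow> 'a set \<Rightarrow> ('a \<Rightarrow> real) \<Rightarrow> real \<Rightarrow> 'a set" where
  "interp_space J X0 n0 X1 n1 \<theta> = {F (complex_of_real \<theta>) | F. F \<in> calderon J X0 n0 X1 n1}"

definition interp_norm ::
  "('a::real_normed_vector \<Rightarrow> 'a) \<Rightarrow> 'a set \<Rightarrow> ('a \<Rightarrow> real) \<Rightarrow> 'a set \<Rightarrow> ('a \<Rightarrow> real) \<Rightarrow> real \<Rightarrow> 'a \<Rightarrow> real" where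
  "interp_norm J X0 n0 X1 n1 \<theta> x =
     Inf {calderon_norm n0 n1 F | F. F \<in> calderon J X0 n0 X1 n1 \<and> F (complex_of_real \<theta>) = x}"

definition is_minimal_fn ::
  "('a::real_normed_vector \<Rightarrow> 'a) \<Rightarrow> 'a set \<Rightarrow> ('a \<Rightarrow> real) \<Rightarrow> 'a set \<Rightarrow> ('a \<Rightarrow> real) \<Rightarrow> real \<Rightarrow> 'a \<Rightarrow> (complex \<Rightarrow> 'a) \<Rightarrow> bool" where
  "is_minimal_fn J X0 n0 X1 n1 \<theta> x F \<longleftrightarrow>
     F \<in> calderon_ess J X0 n0 X1 n1 \<and> F (complex_of_real \<theta>) = x
     \<and> calderon_ess_norm X0 n0 X1 n1 F = interp_norm J X0 n0 X1 n1 \<theta> x"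

definition optimal_pair ::
  "('a::real_normed_vector \<Rightarrow> 'a) \<Rightarrow> 'a set \<Rightarrow> ('a \<Rightarrow> real) \<Rightarrow> 'a set \<Rightarrow> ('a \<Rightarrow> real) \<Rightarrow> bool" where
  "optimal_pair J X0 n0 X1 n1 \<longleftrightarrow> regular_interpolation_pair J X0 n0 X1 n1
     \<and> (\<forall>\<theta>. 0 < \<theta> \<and> \<theta> < 1 \<longrightarrow>
          (\<forall>x\<in>interp_space J X0 n0 X1 n1 \<theta>. \<exists>!F. is_minimal_fn J X0 n0 X1 n1 \<theta> x F))"

definition minimal_fn ::
  "('a::real_normed_vector \<Rightarrow> 'a) \<Rightarrow> 'a set \<Rightarrow> ('a \<Rightarrow> real) \<Rightarrow> 'a set \<Rightarrow> ('a \<Rightarrow> real) \<Rightarrow> real \<Rightarrow> 'a \<Rightarrow> (complex \<Rightarrow> 'a)" where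
  "minimal_fn J X0 n0 X1 n1 \<theta> x = (THE F. is_minimal_fn J X0 n0 X1 n1 \<theta> x F)"

definition canonical_differential ::
  "('a::real_normed_vector \<Rightarrow> 'a) \<Rightarrow> 'a set \<Rightarrow> ('a \<Rightarrow> real) \<Rightarrow> 'a set \<Rightarrow> ('a \<Rightarrow> real) \<Rightarrow> real \<Rightarrow> 'a \<Rightarrow> 'a" where
  "canonical_differential J X0 n0 X1 n1 \<theta> x =
     (THE v. has_cderiv J (minimal_fn J X0 n0 X1 n1 \<theta> x) v (complex_of_real \<theta>))"

definition operator_on :: "('a::real_normed_vector \<Rightarrow> 'a) \<Rightarrow> ('a \<Rightarrow> 'a) \<Rightarrow> bool" where
  "operator_on J g \<longleftrightarrow> bounded_linear g \<and> (\<forall>x. g (J x) = J (g x))"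

end

theory Submission
  imports Defs
begin

text \<open>If \<open>F\<close> is the minimal function of \<open>x\<close> and \<open>g\<close> is a contraction of \<open>X\<^sub>0\<close> and \<open>X\<^sub>1\<close>, then
  \<open>g \<circ> F\<close> lies in the Calder\'on space with essentially bounded boundary values, takes the
  value \<open>g x\<close> at \<open>\<theta>\<close> and has norm at most \<open>\<parallel>x\<parallel>\<^sub>\<theta> = \<parallel>g x\<parallel>\<^sub>\<theta>\<close>.  The minimal function \<open>H\<close> of \<open>g x\<close> is the only function through \<open>g x\<close>
  of norm \<open>\<parallel>g x\<parallel>\<^sub>\<theta>\<close>; along the line from \<open>H\<close> through \<open>g \<circ> F\<close> the norm is continuous and
  unbounded, so if \<open>g \<circ> F\<close> had smaller norm the line would meet that level a second time.
  Hence \<open>g \<circ> F = H\<close>, and differentiating at \<open>\<theta>\<close> gives \<open>g \<Omega>\<^sub>\<theta> x = \<Omega>\<^sub>\<theta> (g x)\<close>.  A surjective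
  isometry of both \<open>X\<^sub>0\<close> and \<open>X\<^sub>1\<close> has an inverse of the same kind, so it maps \<open>X\<^sub>\<theta>\<close>
  isometrically onto itself and the first part applies.\<close>

section \<open>Uniqueness on a level set of a seminorm\<close>

context
  fixes C :: "('b \<Rightarrow> 'a::real_vector) set" and N :: "('b \<Rightarrow> 'a) \<Rightarrow> real"
  assumes lincomb: "\<And>F G c. F \<in> C \<Longrightarrow> G \<in> C \<Longrightarrow> (\<lambda>z. F z + c *\<^sub>R G z) \<in> C"
    and triangle: "\<And>F G. F \<in> C \<Longrightarrow> G \<in> C \<Longrightarrow> N (\<lambda>z. F z + G z) \<le> N F + N G"
    and scale: "\<And>F c. F \<in> C \<Longrightarrow> N (\<lambda>z. c *\<^sub>R F z) \<le> \<bar>c\<bar> * N F"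
begin

lemma scaleR_mem: "F \<in> C \<Longrightarrow> (\<lambda>z. c *\<^sub>R F z) \<in> C"
  using lincomb[of F F "c - 1"] by (simp add: algebra_simps)

lemma norm_scaleR_eq:
  assumes "F \<in> C" and "c \<noteq> 0"
  shows "N (\<lambda>z. c *\<^sub>R F z) = \<bar>c\<bar> * N F"
proof -
  have "N F = N (\<lambda>z. inverse c *\<^sub>R (c *\<^sub>R F z))" using \<open>c \<noteq> 0\<close> by simp
  also have "\<dots> \<le> \<bar>inverse c\<bar> * N (\<lambda>z. c *\<^sub>R F z)" by (rule scale[OF scaleR_mem[OF \<open>F \<in> C\<close>]])
  finally have "\<bar>c\<bar> * N F \<le> N (\<lambda>z. c *\<^sub>R F z)"
    using \<open>c \<noteq> 0\<close> by (simp add: abs_inverse field_simps)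
  with scale[OF \<open>F \<in> C\<close>, of c] show ?thesis by linarith
qed

lemma norm_along_line:
  assumes H: "H \<in> C" and D: "D \<in> C"
  shows "\<bar>N (\<lambda>z. H z + t *\<^sub>R D z) - N (\<lambda>z. H z + s *\<^sub>R D z)\<bar> \<le> N D * \<bar>t - s\<bar>"
    and "t \<noteq> 0 \<Longrightarrow> \<bar>t\<bar> * N D \<le> N (\<lambda>z. H z + t *\<^sub>R D z) + N H"
proof -
  have le: "N (\<lambda>z. H z + t *\<^sub>R D z) \<le> N (\<lambda>z. H z + s *\<^sub>R D z) + N D * \<bar>t - s\<bar>" for s t
    using triangle[OF lincomb[OF H D, of s] scaleR_mem[OF D, of "t - s"]] scale[OF D, of "t - s"]
    by (simp add: algebra_simps)
  from le[of s t] le[of t s]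
  show "\<bar>N (\<lambda>z. H z + t *\<^sub>R D z) - N (\<lambda>z. H z + s *\<^sub>R D z)\<bar> \<le> N D * \<bar>t - s\<bar>"
    by (simp add: abs_minus_commute abs_le_iff)
  assume "t \<noteq> 0"
  have "\<bar>t\<bar> * N D = N (\<lambda>z. (H z + t *\<^sub>R D z) + (-1) *\<^sub>R H z)"
    using norm_scaleR_eq[OF D \<open>t \<noteq> 0\<close>] by simp
  also have "\<dots> \<le> N (\<lambda>z. H z + t *\<^sub>R D z) + N H"
    using triangle[OF lincomb[OF H D, of t] scaleR_mem[OF H, of "-1"]] norm_scaleR_eq[OF H, of "-1"]
    by simp
  finally show "\<bar>t\<bar> * N D \<le> N (\<lambda>z. H z + t *\<^sub>R D z) + N H" .
qed

lemma unique_norm_level_imp_eq: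
  assumes nonneg: "\<And>F. F \<in> C \<Longrightarrow> 0 \<le> N F"
    and H: "H \<in> C" "H w = y" and P: "P \<in> C" "P w = y" "N P \<le> N H"
    and unique: "\<And>Q. Q \<in> C \<Longrightarrow> Q w = y \<Longrightarrow> N Q = N H \<Longrightarrow> Q = H"
  shows "P = H"
proof (rule ccontr)
  assume "P \<noteq> H"
  with unique P have less: "N P < N H" by fastforce
  define D where "D = (\<lambda>z. P z + (-1) *\<^sub>R H z)"
  define \<phi> where "\<phi> t = N (\<lambda>z. H z + t *\<^sub>R D z)" for t
  have D: "D \<in> C" unfolding D_def using lincomb[OF P(1) H(1)] .
  have at_1: "(\<lambda>z. H z + 1 *\<^sub>R D z) = P" by (simp add: D_def)
  have lipschitz: "\<bar>\<phi> t - \<phi> s\<bar> \<le> N D * \<bar>t - s\<bar>" for s t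
    unfolding \<phi>_def by (rule norm_along_line(1)[OF H(1) D])
  have "N H - N P \<le> N D" using lipschitz[of 1 0] at_1 by (simp add: \<phi>_def)
  hence ND: "0 < N D" using less by simp
  define T where "T = 2 * N H / N D + 1"
  have T: "1 \<le> T" unfolding T_def using ND nonneg[OF H(1)] by simp
  have "T * N D \<le> \<phi> T + N H" using norm_along_line(2)[OF H(1) D, of T] T by (simp add: \<phi>_def)
  moreover have "T * N D = 2 * N H + N D" unfolding T_def using ND by (simp add: field_simps)
  ultimately have above: "N H \<le> \<phi> T" using ND by linarith
  have "continuous_on {1..T} \<phi>"
    by (rule lipschitz_on_continuous_on[of "N D"])
      (use lipschitz ND in \<open>auto simp: lipschitz_on_def dist_real_def\<close>)
  then obtain s where s: "1 \<le> s" "\<phi> s = N H"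
    using IVT'[of \<phi> 1 "N H" T] less above T at_1 by (auto simp: \<phi>_def)
  have "(\<lambda>z. H z + s *\<^sub>R D z) = H"
    using unique[OF lincomb[OF H(1) D]] s(2) H(2) P(2) by (simp add: \<phi>_def D_def)
  hence "D = (\<lambda>z. 0)" using s(1) by (auto simp: fun_eq_iff)
  hence "P = H" by (auto simp: D_def fun_eq_iff)
  with \<open>P \<noteq> H\<close> show False ..
qed

end

section \<open>Complex structure and Calder\'on functions\<close>

lemma cscale_of_real [simp]: "cscale J (complex_of_real c) x = c *\<^sub>R x"
  by (simp add: cscale_def)

lemma complex_subspace_imp_subspace: "complex_subspace J X \<Longrightarrow> subspace X"
  unfolding complex_subspace_def subspace_def by (metis cscale_of_real)

lemma complex_norm_on_nonneg: "complex_norm_on J X n \<Longrightarrow> x \<in> X \<Longrightarrow> 0 \<le> n x"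
  unfolding complex_norm_on_def by simp

lemma complex_norm_on_triangle:
  "complex_norm_on J X n \<Longrightarrow> x \<in> X \<Longrightarrow> y \<in> X \<Longrightarrow> n (x + y) \<le> n x + n y"
  unfolding complex_norm_on_def by simp

lemma complex_norm_on_scaleR: "complex_norm_on J X n \<Longrightarrow> x \<in> X \<Longrightarrow> n (c *\<^sub>R x) = \<bar>c\<bar> * n x"
  unfolding complex_norm_on_def by (metis cscale_of_real norm_of_real)

lemma regular_interpolation_pairD:
  assumes "regular_interpolation_pair J X0 n0 X1 n1"
  shows "complex_structure J" "subspace X0" "subspace X1"
    "complex_norm_on J X0 n0" "complex_norm_on J X1 n1"
    "\<And>x. \<exists>a\<in>X0. \<exists>b\<in>X1. a + b = x"
    "\<And>x. norm x = Inf {n0 a + n1 b | a b. a \<in> X0 \<and> b \<in> X1 \<and> a + b = x}"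
  using assms unfolding regular_interpolation_pair_def
  by (auto intro: complex_subspace_imp_subspace)

lemma cscale_add: "linear J \<Longrightarrow> cscale J h (a + b) = cscale J h a + cscale J h b"
  unfolding cscale_def by (simp add: linear_add scaleR_add_right)

lemma operator_on_cscale: "operator_on J g \<Longrightarrow> g (cscale J h v) = cscale J h (g v)"
  unfolding operator_on_def cscale_def
  by (simp add: bounded_linear.linear linear_add linear_scale)

lemma operator_on_scaleR: "complex_structure J \<Longrightarrow> operator_on J (\<lambda>x. c *\<^sub>R x)"
  unfolding operator_on_def complex_structure_def
  by (simp add: bounded_linear_scaleR_right linear_scale)

lemma has_cderiv_compose:
  assumes "operator_on J g" and "has_cderiv J F v z"
  shows "has_cderiv J (\<lambda>z. g (F z)) (g v) z"
proof -
  have "bounded_linear g" using assms(1) unfolding operator_on_def by blast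
  from bounded_linear.has_derivative[OF this assms(2)[unfolded has_cderiv_def]]
  show ?thesis unfolding has_cderiv_def operator_on_cscale[OF assms(1)] .
qed

lemma has_cderiv_unique: "has_cderiv J F v z \<Longrightarrow> has_cderiv J F w z \<Longrightarrow> v = w"
  unfolding has_cderiv_def by (drule (1) has_derivative_unique) (metis cscale_of_real scaleR_one of_real_1)

lemma calderon_base_add:
  assumes J: "complex_structure J" and F: "calderon_base J F" and G: "calderon_base J G"
  shows "calderon_base J (\<lambda>z. F z + G z)"
proof -
  have "bounded ((\<lambda>z. F z + G z) ` cstrip)"
    using F G unfolding calderon_base_def by (intro bounded_plus_comp) auto
  moreover have "continuous_on cstrip (\<lambda>z. F z + G z)"
    using F G unfolding calderon_base_def by (auto intro: continuous_on_add)
  moreover have "\<exists>u. has_cderiv J (\<lambda>z. F z + G z) u z" if z: "z \<in> strip" for z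
  proof -
    obtain v w where "has_cderiv J F v z" "has_cderiv J G w z"
      using F G z unfolding calderon_base_def canalytic_on_def by blast
    from has_derivative_add[OF this[unfolded has_cderiv_def]] show ?thesis
      using J unfolding has_cderiv_def complex_structure_def by (auto simp: cscale_add intro!: exI[of _ "v + w"])
  qed
  ultimately show ?thesis using F G unfolding calderon_base_def canalytic_on_def by auto
qed

lemma calderon_base_compose:
  assumes g: "operator_on J g" and F: "calderon_base J F"
  shows "calderon_base J (\<lambda>z. g (F z))"
proof -
  have bl: "bounded_linear g" using g unfolding operator_on_def by blast
  have "bounded ((\<lambda>z. g (F z)) ` cstrip)"
    using bounded_linear_image[OF _ bl, of "F ` cstrip"] F unfolding calderon_base_def
    by (simp add: image_image)
  moreover have "continuous_on cstrip (\<lambda>z. g (F z))"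
    using F unfolding calderon_base_def
    by (intro continuous_on_compose2[OF bounded_linear.continuous_on[OF bl continuous_on_id]]) auto
  moreover have "canalytic_on J (\<lambda>z. g (F z)) strip"
    using F has_cderiv_compose[OF g] unfolding calderon_base_def canalytic_on_def by blast
  ultimately show ?thesis
    using F linear_0[OF bounded_linear.linear[OF bl]] unfolding calderon_base_def by auto
qed

section \<open>Essentially bounded boundary values\<close>

lemma bdry_ess_bdd_nonneg:
  assumes n: "complex_norm_on J X n" and M: "bdry_ess_bdd X n f M"
  shows "0 \<le> M"
proof (rule ccontr)
  assume "\<not> 0 \<le> M"
  from M[unfolded bdry_ess_bdd_def] have "AE t::real in lborel. False"
    by (rule eventually_mono) (use complex_norm_on_nonneg[OF n] \<open>\<not> 0 \<le> M\<close> in force)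
  thus False by (simp add: ae_filter_eq_bot_iff)
qed

lemma ess_bdry_norm_le: "complex_norm_on J X n \<Longrightarrow> bdry_ess_bdd X n f M \<Longrightarrow> ess_bdry_norm X n f \<le> M"
  unfolding ess_bdry_norm_def
  by (rule cInf_lower) (auto intro: bdd_belowI[of _ 0] bdry_ess_bdd_nonneg)

lemma ess_bdry_norm_nonneg: "complex_norm_on J X n \<Longrightarrow> bdry_ess_bdd X n f M \<Longrightarrow> 0 \<le> ess_bdry_norm X n f"
  unfolding ess_bdry_norm_def by (auto intro!: cInf_greatest dest: bdry_ess_bdd_nonneg)

text \<open>Countably many essential bounds hold simultaneously almost everywhere.\<close>

lemma bdry_ess_bdd_ess_bdry_norm:
  assumes n: "complex_norm_on J X n" and M: "bdry_ess_bdd X n f M"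
  shows "bdry_ess_bdd X n f (ess_bdry_norm X n f)"
proof -
  let ?S = "{M. bdry_ess_bdd X n f M}"
  have "\<exists>M\<in>?S. M < Inf ?S + inverse (real (Suc k))" for k
    using M by (intro cInf_lessD) auto
  then obtain bound where bound: "\<And>k. bdry_ess_bdd X n f (bound k)"
    "\<And>k. bound k < Inf ?S + inverse (real (Suc k))"
    by (metis mem_Collect_eq)
  have "AE t in lborel. \<forall>k. f t \<in> X \<and> n (f t) \<le> bound k"
    using bound(1) unfolding bdry_ess_bdd_def AE_all_countable by blast
  hence "AE t in lborel. f t \<in> X \<and> n (f t) \<le> Inf ?S"
  proof (rule eventually_mono)
    fix t assume bounded: "\<forall>k. f t \<in> X \<and> n (f t) \<le> bound k"
    have "n (f t) \<le> Inf ?S + e" if "0 < e" for e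
    proof -
      obtain k where "inverse (real (Suc k)) < e" using reals_Archimedean[OF \<open>0 < e\<close>] by blast
      thus ?thesis using bounded bound(2)[of k] by (meson add_left_mono less_imp_le order.trans)
    qed
    thus "f t \<in> X \<and> n (f t) \<le> Inf ?S" using bounded by (auto intro: field_le_epsilon)
  qed
  thus ?thesis unfolding bdry_ess_bdd_def ess_bdry_norm_def .
qed

lemma bdry_ess_bdd_add:
  assumes X: "subspace X" and n: "complex_norm_on J X n"
    and "bdry_ess_bdd X n f M1" and "bdry_ess_bdd X n g M2"
  shows "bdry_ess_bdd X n (\<lambda>t. f t + g t) (M1 + M2)"
  using AE_conjI[OF assms(3,4)[unfolded bdry_ess_bdd_def]] unfolding bdry_ess_bdd_def
  by (rule eventually_mono)
    (use subspace_add[OF X] complex_norm_on_triangle[OF n] in \<open>fastforce\<close>)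

lemma bdry_ess_bdd_scaleR:
  assumes X: "subspace X" and n: "complex_norm_on J X n" and "bdry_ess_bdd X n f M"
  shows "bdry_ess_bdd X n (\<lambda>t. c *\<^sub>R f t) (\<bar>c\<bar> * M)"
  using assms(3) unfolding bdry_ess_bdd_def
  by (rule eventually_mono)
    (use subspace_scale[OF X] complex_norm_on_scaleR[OF n] in \<open>auto intro: mult_left_mono\<close>)

lemma bdry_ess_bdd_contraction:
  assumes "\<forall>x\<in>X. g x \<in> X \<and> n (g x) \<le> n x" and "bdry_ess_bdd X n f M"
  shows "bdry_ess_bdd X n (\<lambda>t. g (f t)) M"
  using assms(2) unfolding bdry_ess_bdd_def
  by (rule eventually_mono) (use assms(1) in force)

lemma ess_bdry_norm_add:
  assumes X: "subspace X" and n: "complex_norm_on J X n"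
    and f: "bdry_ess_bdd X n f M1" and g: "bdry_ess_bdd X n g M2"
  shows "ess_bdry_norm X n (\<lambda>t. f t + g t) \<le> ess_bdry_norm X n f + ess_bdry_norm X n g"
  by (intro ess_bdry_norm_le[OF n] bdry_ess_bdd_add[OF X n]
      bdry_ess_bdd_ess_bdry_norm[OF n f] bdry_ess_bdd_ess_bdry_norm[OF n g])

lemma ess_bdry_norm_scaleR:
  assumes X: "subspace X" and n: "complex_norm_on J X n" and f: "bdry_ess_bdd X n f M"
  shows "ess_bdry_norm X n (\<lambda>t. c *\<^sub>R f t) \<le> \<bar>c\<bar> * ess_bdry_norm X n f"
  by (intro ess_bdry_norm_le[OF n] bdry_ess_bdd_scaleR[OF X n] bdry_ess_bdd_ess_bdry_norm[OF n f])

lemma ess_bdry_norm_contraction: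
  assumes n: "complex_norm_on J X n" and g: "\<forall>x\<in>X. g x \<in> X \<and> n (g x) \<le> n x"
    and f: "bdry_ess_bdd X n f M"
  shows "ess_bdry_norm X n (\<lambda>t. g (f t)) \<le> ess_bdry_norm X n f"
  by (intro ess_bdry_norm_le[OF n] bdry_ess_bdd_contraction[OF g] bdry_ess_bdd_ess_bdry_norm[OF n f])

lemma calderon_essE:
  assumes "F \<in> calderon_ess J X0 n0 X1 n1"
  obtains M0 M1 where "calderon_base J F"
    "bdry_ess_bdd X0 n0 (\<lambda>t. F (Complex 0 t)) M0" "bdry_ess_bdd X1 n1 (\<lambda>t. F (Complex 1 t)) M1"
  using assms unfolding calderon_ess_def by blast

context
  fixes J X0 n0 X1 n1
  assumes pair: "regular_interpolation_pair J X0 n0 X1 n1"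
begin

lemma calderon_ess_lincomb:
  assumes F: "F \<in> calderon_ess J X0 n0 X1 n1" and G: "G \<in> calderon_ess J X0 n0 X1 n1"
  shows "(\<lambda>z. F z + c *\<^sub>R G z) \<in> calderon_ess J X0 n0 X1 n1"
proof -
  note pairD = regular_interpolation_pairD[OF pair]
  obtain A0 A1 B0 B1 where "calderon_base J F" "calderon_base J G"
    and A: "bdry_ess_bdd X0 n0 (\<lambda>t. F (Complex 0 t)) A0" "bdry_ess_bdd X1 n1 (\<lambda>t. F (Complex 1 t)) A1"
    and B: "bdry_ess_bdd X0 n0 (\<lambda>t. G (Complex 0 t)) B0" "bdry_ess_bdd X1 n1 (\<lambda>t. G (Complex 1 t)) B1"
    using F G by (elim calderon_essE)
  hence "calderon_base J (\<lambda>z. F z + c *\<^sub>R G z)"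
    using calderon_base_add calderon_base_compose operator_on_scaleR pairD(1) by blast
  moreover note bdry_ess_bdd_add[OF pairD(2,4) A(1) bdry_ess_bdd_scaleR[OF pairD(2,4) B(1)]]
    bdry_ess_bdd_add[OF pairD(3,5) A(2) bdry_ess_bdd_scaleR[OF pairD(3,5) B(2)]]
  ultimately show ?thesis unfolding calderon_ess_def by blast
qed

lemma calderon_ess_norm_triangle:
  assumes "F \<in> calderon_ess J X0 n0 X1 n1" and "G \<in> calderon_ess J X0 n0 X1 n1"
  shows "calderon_ess_norm X0 n0 X1 n1 (\<lambda>z. F z + G z)
           \<le> calderon_ess_norm X0 n0 X1 n1 F + calderon_ess_norm X0 n0 X1 n1 G"
proof -
  note pairD = regular_interpolation_pairD[OF pair]
  obtain A0 A1 B0 B1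
    where A: "bdry_ess_bdd X0 n0 (\<lambda>t. F (Complex 0 t)) A0" "bdry_ess_bdd X1 n1 (\<lambda>t. F (Complex 1 t)) A1"
    and B: "bdry_ess_bdd X0 n0 (\<lambda>t. G (Complex 0 t)) B0" "bdry_ess_bdd X1 n1 (\<lambda>t. G (Complex 1 t)) B1"
    using assms by (elim calderon_essE)
  show ?thesis
    using ess_bdry_norm_add[OF pairD(2,4) A(1) B(1)] ess_bdry_norm_add[OF pairD(3,5) A(2) B(2)]
    unfolding calderon_ess_norm_def by linarith
qed

lemma calderon_ess_norm_scaleR:
  assumes "F \<in> calderon_ess J X0 n0 X1 n1"
  shows "calderon_ess_norm X0 n0 X1 n1 (\<lambda>z. c *\<^sub>R F z) \<le> \<bar>c\<bar> * calderon_ess_norm X0 n0 X1 n1 F"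
proof -
  note pairD = regular_interpolation_pairD[OF pair]
  obtain A0 A1
    where A: "bdry_ess_bdd X0 n0 (\<lambda>t. F (Complex 0 t)) A0" "bdry_ess_bdd X1 n1 (\<lambda>t. F (Complex 1 t)) A1"
    using assms by (elim calderon_essE)
  show ?thesis
    using ess_bdry_norm_scaleR[OF pairD(2,4) A(1), of c] ess_bdry_norm_scaleR[OF pairD(3,5) A(2), of c]
    unfolding calderon_ess_norm_def max_mult_distrib_left if_P[OF abs_ge_zero] by (rule max.mono)
qed

lemma calderon_ess_norm_nonneg:
  "F \<in> calderon_ess J X0 n0 X1 n1 \<Longrightarrow> 0 \<le> calderon_ess_norm X0 n0 X1 n1 F"
  unfolding calderon_ess_norm_def
  by (elim calderon_essE) (metis ess_bdry_norm_nonneg regular_interpolation_pairD(4)[OF pair] max.coboundedI1)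

lemma calderon_ess_compose_contraction:
  assumes g: "operator_on J g"
    and g0: "\<forall>x\<in>X0. g x \<in> X0 \<and> n0 (g x) \<le> n0 x"
    and g1: "\<forall>x\<in>X1. g x \<in> X1 \<and> n1 (g x) \<le> n1 x"
    and F: "F \<in> calderon_ess J X0 n0 X1 n1"
  shows "(\<lambda>z. g (F z)) \<in> calderon_ess J X0 n0 X1 n1"
    and "calderon_ess_norm X0 n0 X1 n1 (\<lambda>z. g (F z)) \<le> calderon_ess_norm X0 n0 X1 n1 F"
proof -
  note pairD = regular_interpolation_pairD[OF pair]
  obtain A0 A1 where "calderon_base J F"
    and A: "bdry_ess_bdd X0 n0 (\<lambda>t. F (Complex 0 t)) A0" "bdry_ess_bdd X1 n1 (\<lambda>t. F (Complex 1 t)) A1"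
    using F by (elim calderon_essE)
  then show "(\<lambda>z. g (F z)) \<in> calderon_ess J X0 n0 X1 n1"
    unfolding calderon_ess_def
    using calderon_base_compose[OF g] bdry_ess_bdd_contraction[OF g0 A(1)] bdry_ess_bdd_contraction[OF g1 A(2)]
    by blast
  show "calderon_ess_norm X0 n0 X1 n1 (\<lambda>z. g (F z)) \<le> calderon_ess_norm X0 n0 X1 n1 F"
    using ess_bdry_norm_contraction[OF pairD(4) g0 A(1)] ess_bdry_norm_contraction[OF pairD(5) g1 A(2)]
    unfolding calderon_ess_norm_def by linarith
qed

end

section \<open>Minimal functions and the canonical differential\<close>

context
  fixes J :: "'a::real_normed_vector \<Rightarrow> 'a" and X0 X1 :: "'a set" and n0 n1 :: "'a \<Rightarrow> real"
    and \<theta> :: real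
  assumes opt: "optimal_pair J X0 n0 X1 n1" and \<theta>: "0 < \<theta>" "\<theta> < 1"
begin

lemma minimal_fn_is_minimal:
  assumes "x \<in> interp_space J X0 n0 X1 n1 \<theta>"
  shows "is_minimal_fn J X0 n0 X1 n1 \<theta> x (minimal_fn J X0 n0 X1 n1 \<theta> x)"
    and "is_minimal_fn J X0 n0 X1 n1 \<theta> x F \<Longrightarrow> F = minimal_fn J X0 n0 X1 n1 \<theta> x"
proof -
  have unique: "\<exists>!F. is_minimal_fn J X0 n0 X1 n1 \<theta> x F"
    using opt \<theta> assms unfolding optimal_pair_def by blast
  show "is_minimal_fn J X0 n0 X1 n1 \<theta> x (minimal_fn J X0 n0 X1 n1 \<theta> x)"
    unfolding minimal_fn_def by (rule theI'[OF unique])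
  show "is_minimal_fn J X0 n0 X1 n1 \<theta> x F \<Longrightarrow> F = minimal_fn J X0 n0 X1 n1 \<theta> x"
    unfolding minimal_fn_def by (rule the1_equality[OF unique, symmetric])
qed

lemma canonical_differential_eq:
  assumes x: "x \<in> interp_space J X0 n0 X1 n1 \<theta>"
  obtains v where "has_cderiv J (minimal_fn J X0 n0 X1 n1 \<theta> x) v (complex_of_real \<theta>)"
    and "canonical_differential J X0 n0 X1 n1 \<theta> x = v"
proof -
  have "complex_of_real \<theta> \<in> strip" unfolding strip_def using \<theta> by simp
  then obtain v where v: "has_cderiv J (minimal_fn J X0 n0 X1 n1 \<theta> x) v (complex_of_real \<theta>)"
    using minimal_fn_is_minimal(1)[OF x]
    unfolding is_minimal_fn_def calderon_ess_def calderon_base_def canalytic_on_def by blast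
  moreover from v have "canonical_differential J X0 n0 X1 n1 \<theta> x = v"
    unfolding canonical_differential_def by (blast intro: has_cderiv_unique)
  ultimately show ?thesis by (rule that)
qed

lemma minimal_fn_compose_contraction:
  assumes g: "operator_on J g"
    and g0: "\<forall>x\<in>X0. g x \<in> X0 \<and> n0 (g x) \<le> n0 x"
    and g1: "\<forall>x\<in>X1. g x \<in> X1 \<and> n1 (g x) \<le> n1 x"
    and x: "x \<in> interp_space J X0 n0 X1 n1 \<theta>" and gx: "g x \<in> interp_space J X0 n0 X1 n1 \<theta>"
    and norm_gx: "interp_norm J X0 n0 X1 n1 \<theta> (g x) = interp_norm J X0 n0 X1 n1 \<theta> x"
  shows "(\<lambda>z. g (minimal_fn J X0 n0 X1 n1 \<theta> x z)) = minimal_fn J X0 n0 X1 n1 \<theta> (g x)"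
proof -
  have pair: "regular_interpolation_pair J X0 n0 X1 n1" using opt unfolding optimal_pair_def by blast
  let ?C = "calderon_ess J X0 n0 X1 n1" and ?N = "calderon_ess_norm X0 n0 X1 n1"
  let ?F = "minimal_fn J X0 n0 X1 n1 \<theta> x" and ?H = "minimal_fn J X0 n0 X1 n1 \<theta> (g x)"
  have F: "?F \<in> ?C" "?F (complex_of_real \<theta>) = x" "?N ?F = interp_norm J X0 n0 X1 n1 \<theta> x"
    using minimal_fn_is_minimal(1)[OF x] unfolding is_minimal_fn_def by auto
  have H: "?H \<in> ?C" "?H (complex_of_real \<theta>) = g x" "?N ?H = interp_norm J X0 n0 X1 n1 \<theta> (g x)"
    using minimal_fn_is_minimal(1)[OF gx] unfolding is_minimal_fn_def by auto
  txt \<open>Minimality alone does not apply to \<open>g \<circ> F\<close>: its norm may a priori lie below \<open>\<parallel>g x\<parallel>\<^sub>\<theta>\<close>,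
    which is an infimum over the smaller Calder\'on space with continuous boundary values.\<close>
  show ?thesis
  proof (rule unique_norm_level_imp_eq[where C = ?C and N = ?N])
    show "(\<lambda>z. g (?F z)) \<in> ?C" "?N (\<lambda>z. g (?F z)) \<le> ?N ?H"
      using calderon_ess_compose_contraction[OF pair g g0 g1 F(1)] F(3) H(3) norm_gx by auto
    fix Q assume "Q \<in> ?C" "Q (complex_of_real \<theta>) = g x" "?N Q = ?N ?H"
    thus "Q = ?H" using H(3) by (intro minimal_fn_is_minimal(2)[OF gx]) (simp add: is_minimal_fn_def)
  qed (use F(2) H calderon_ess_lincomb[OF pair] calderon_ess_norm_triangle[OF pair]
      calderon_ess_norm_scaleR[OF pair] calderon_ess_norm_nonneg[OF pair] in auto)
qed

lemma canonical_differential_compose_contraction: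
  assumes g: "operator_on J g"
    and g0: "\<forall>x\<in>X0. g x \<in> X0 \<and> n0 (g x) \<le> n0 x"
    and g1: "\<forall>x\<in>X1. g x \<in> X1 \<and> n1 (g x) \<le> n1 x"
    and x: "x \<in> interp_space J X0 n0 X1 n1 \<theta>" and gx: "g x \<in> interp_space J X0 n0 X1 n1 \<theta>"
    and norm_gx: "interp_norm J X0 n0 X1 n1 \<theta> (g x) = interp_norm J X0 n0 X1 n1 \<theta> x"
  shows "g (canonical_differential J X0 n0 X1 n1 \<theta> x) = canonical_differential J X0 n0 X1 n1 \<theta> (g x)"
proof -
  obtain v where v: "has_cderiv J (minimal_fn J X0 n0 X1 n1 \<theta> x) v (complex_of_real \<theta>)"
    and \<Omega>x: "canonical_differential J X0 n0 X1 n1 \<theta> x = v"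
    using canonical_differential_eq[OF x] .
  obtain w where w: "has_cderiv J (minimal_fn J X0 n0 X1 n1 \<theta> (g x)) w (complex_of_real \<theta>)"
    and \<Omega>gx: "canonical_differential J X0 n0 X1 n1 \<theta> (g x) = w"
    using canonical_differential_eq[OF gx] .
  have "has_cderiv J (minimal_fn J X0 n0 X1 n1 \<theta> (g x)) (g v) (complex_of_real \<theta>)"
    using has_cderiv_compose[OF g v] minimal_fn_compose_contraction[OF assms] by simp
  with w \<Omega>x \<Omega>gx show ?thesis by (metis has_cderiv_unique)
qed

end

section \<open>Surjective isometries of the pair\<close>

lemma bdry_cont_bdd_isometry:
  assumes g: "linear g" and X: "subspace X" and iso: "\<forall>x\<in>X. g x \<in> X \<and> n (g x) = n x"
    and f: "bdry_cont_bdd X n f"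
  shows "bdry_cont_bdd X n (\<lambda>t. g (f t))"
proof -
  have fX: "f t \<in> X" for t using f unfolding bdry_cont_bdd_def by blast
  have "n (g (f s) - g (f t)) = n (f s - f t)" for s t
    using iso subspace_diff[OF X fX fX] linear_diff[OF g, of "f s" "f t"] by metis
  thus ?thesis using f iso fX unfolding bdry_cont_bdd_def by simp
qed

lemma linear_inv:
  assumes "linear g" and "bij g"
  shows "linear (inv g)"
proof (rule linearI)
  have g_inv: "g (inv g y) = y" for y using \<open>bij g\<close> by (simp add: bij_is_surj surj_f_inv_f)
  have inv_g: "inv g (g x) = x" for x using \<open>bij g\<close> by (simp add: bij_is_inj)
  show "inv g (x + y) = inv g x + inv g y" for x y
    using inv_g[of "inv g x + inv g y"] by (simp add: linear_add[OF \<open>linear g\<close>] g_inv)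
  show "inv g (c *\<^sub>R x) = c *\<^sub>R inv g x" for c x
    using inv_g[of "c *\<^sub>R inv g x"] by (simp add: linear_scale[OF \<open>linear g\<close>] g_inv)
qed

lemma inv_isometry_onto:
  assumes "inj g" and "g ` X = X" and "\<forall>x\<in>X. n (g x) = n x"
  shows "\<forall>x\<in>X. inv g x \<in> X \<and> n (inv g x) = n x"
proof
  fix x assume "x \<in> X"
  then obtain a where "a \<in> X" "x = g a" using \<open>g ` X = X\<close> by blast
  thus "inv g x \<in> X \<and> n (inv g x) = n x" using assms(1,3) by simp
qed

context
  fixes J X0 n0 X1 n1
  assumes pair: "regular_interpolation_pair J X0 n0 X1 n1"
begin

lemma calderon_compose_isometry:
  assumes g: "operator_on J g"
    and g0: "\<forall>x\<in>X0. g x \<in> X0 \<and> n0 (g x) = n0 x"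
    and g1: "\<forall>x\<in>X1. g x \<in> X1 \<and> n1 (g x) = n1 x"
    and F: "F \<in> calderon J X0 n0 X1 n1"
  shows "(\<lambda>z. g (F z)) \<in> calderon J X0 n0 X1 n1"
    and "calderon_norm n0 n1 (\<lambda>z. g (F z)) = calderon_norm n0 n1 F"
proof -
  note pairD = regular_interpolation_pairD[OF pair]
  have "linear g" using g unfolding operator_on_def by (simp add: bounded_linear.linear)
  moreover have "calderon_base J F" and b0: "bdry_cont_bdd X0 n0 (\<lambda>t. F (Complex 0 t))"
    and b1: "bdry_cont_bdd X1 n1 (\<lambda>t. F (Complex 1 t))"
    using F unfolding calderon_def by auto
  ultimately show "(\<lambda>z. g (F z)) \<in> calderon J X0 n0 X1 n1"
    unfolding calderon_def using calderon_base_compose[OF g] bdry_cont_bdd_isometry pairD(2,3) g0 g1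
    by blast
  have "(\<lambda>t. n0 (g (F (Complex 0 t)))) = (\<lambda>t. n0 (F (Complex 0 t)))"
    and "(\<lambda>t. n1 (g (F (Complex 1 t)))) = (\<lambda>t. n1 (F (Complex 1 t)))"
    using b0 b1 g0 g1 unfolding bdry_cont_bdd_def by auto
  then show "calderon_norm n0 n1 (\<lambda>z. g (F z)) = calderon_norm n0 n1 F"
    unfolding calderon_norm_def by (simp only:)
qed

lemma inv_surjective_isometry:
  assumes g: "operator_on J g" and "bij g"
    and X0: "g ` X0 = X0" "\<forall>x\<in>X0. n0 (g x) = n0 x"
    and X1: "g ` X1 = X1" "\<forall>x\<in>X1. n1 (g x) = n1 x"
  shows "operator_on J (inv g)"
    and inv0: "\<forall>x\<in>X0. inv g x \<in> X0 \<and> n0 (inv g x) = n0 x"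
    and inv1: "\<forall>x\<in>X1. inv g x \<in> X1 \<and> n1 (inv g x) = n1 x"
proof -
  note pairD = regular_interpolation_pairD[OF pair]
  have lin: "linear (inv g)"
    using g \<open>bij g\<close> unfolding operator_on_def by (simp add: bounded_linear.linear linear_inv)
  show inv0: "\<forall>x\<in>X0. inv g x \<in> X0 \<and> n0 (inv g x) = n0 x"
    and inv1: "\<forall>x\<in>X1. inv g x \<in> X1 \<and> n1 (inv g x) = n1 x"
    using inv_isometry_onto[OF bij_is_inj[OF \<open>bij g\<close>]] X0 X1 by blast+
  have "norm (inv g y) \<le> norm y" for y
  proof -
    let ?D = "\<lambda>y. {n0 a + n1 b | a b. a \<in> X0 \<and> b \<in> X1 \<and> a + b = y}"
    have "?D y \<noteq> {}" using pairD(6)[of y] by blast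
    moreover have "bdd_below (?D (inv g y))"
      using complex_norm_on_nonneg[OF pairD(4)] complex_norm_on_nonneg[OF pairD(5)]
      by (intro bdd_belowI[of _ 0]) fastforce
    moreover have "?D y \<subseteq> ?D (inv g y)"
    proof
      fix m assume "m \<in> ?D y"
      then obtain a b where "a \<in> X0" "b \<in> X1" "a + b = y" "m = n0 a + n1 b" by blast
      with inv0 inv1 linear_add[OF lin, of a b]
      show "m \<in> ?D (inv g y)" by (intro CollectI exI[of _ "inv g a"] exI[of _ "inv g b"]) simp
    qed
    ultimately show ?thesis unfolding pairD(7) by (rule cInf_superset_mono)
  qed
  hence "bounded_linear (inv g)"
    using lin by (intro bounded_linear_intro[of _ 1]) (simp_all add: linear_add linear_scale)
  moreover have "inv g (J x) = J (inv g x)" for x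
    using \<open>bij g\<close> g unfolding operator_on_def
    by (metis bij_inv_eq_iff)
  ultimately show "operator_on J (inv g)" unfolding operator_on_def by simp
qed

lemma interp_space_surjective_isometry:
  assumes g: "operator_on J g" and "bij g"
    and X0: "g ` X0 = X0" "\<forall>x\<in>X0. n0 (g x) = n0 x"
    and X1: "g ` X1 = X1" "\<forall>x\<in>X1. n1 (g x) = n1 x"
    and x: "x \<in> interp_space J X0 n0 X1 n1 \<theta>"
  shows "g x \<in> interp_space J X0 n0 X1 n1 \<theta>"
    and "interp_norm J X0 n0 X1 n1 \<theta> (g x) = interp_norm J X0 n0 X1 n1 \<theta> x"
proof -
  have g0: "\<forall>x\<in>X0. g x \<in> X0 \<and> n0 (g x) = n0 x" and g1: "\<forall>x\<in>X1. g x \<in> X1 \<and> n1 (g x) = n1 x"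
    using X0 X1 by blast+
  note inv = inv_surjective_isometry[OF assms(1-6)]
  have inv_g: "inv g (g y) = y" for y using \<open>bij g\<close> by (simp add: bij_is_inj)
  obtain F where F: "F \<in> calderon J X0 n0 X1 n1" "F (complex_of_real \<theta>) = x"
    using x unfolding interp_space_def by blast
  show "g x \<in> interp_space J X0 n0 X1 n1 \<theta>"
    unfolding interp_space_def using calderon_compose_isometry(1)[OF g g0 g1 F(1)] F(2)
    by (intro CollectI exI[of _ "\<lambda>z. g (F z)"]) simp
  let ?norms = "\<lambda>y. {calderon_norm n0 n1 G | G. G \<in> calderon J X0 n0 X1 n1 \<and> G (complex_of_real \<theta>) = y}"
  have "?norms (g x) = ?norms x"
  proof (intro equalityI subsetI)
    fix m assume "m \<in> ?norms (g x)"
    then obtain G where "G \<in> calderon J X0 n0 X1 n1" "G (complex_of_real \<theta>) = g x" "m = calderon_norm n0 n1 G"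
      by blast
    with calderon_compose_isometry[OF inv] inv_g show "m \<in> ?norms x"
      by (intro CollectI exI[of _ "\<lambda>z. inv g (G z)"]) simp
  next
    fix m assume "m \<in> ?norms x"
    then obtain G where "G \<in> calderon J X0 n0 X1 n1" "G (complex_of_real \<theta>) = x" "m = calderon_norm n0 n1 G"
      by blast
    with calderon_compose_isometry[OF g g0 g1] show "m \<in> ?norms (g x)"
      by (intro CollectI exI[of _ "\<lambda>z. g (G z)"]) simp
  qed
  then show "interp_norm J X0 n0 X1 n1 \<theta> (g x) = interp_norm J X0 n0 X1 n1 \<theta> x"
    unfolding interp_norm_def by (simp only:)
qed

end

theorem mainTheorem7:
  fixes J :: "'a::real_normed_vector \<Rightarrow> 'a"
    and X0 X1 :: "'a set" and n0 n1 :: "'a \<Rightarrow> real" and \<theta> :: real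
  assumes opt: "optimal_pair J X0 n0 X1 n1"
    and th: "0 < \<theta>" "\<theta> < 1"
  shows "(\<forall>g. operator_on J g
            \<and> (\<forall>x\<in>X0. g x \<in> X0 \<and> n0 (g x) \<le> n0 x)
            \<and> (\<forall>x\<in>X1. g x \<in> X1 \<and> n1 (g x) \<le> n1 x)
            \<and> (\<forall>x\<in>interp_space J X0 n0 X1 n1 \<theta>. g x \<in> interp_space J X0 n0 X1 n1 \<theta>
                  \<and> interp_norm J X0 n0 X1 n1 \<theta> (g x) = interp_norm J X0 n0 X1 n1 \<theta> x)
          \<longrightarrow> (\<forall>x\<in>interp_space J X0 n0 X1 n1 \<theta>.
                 g (canonical_differential J X0 n0 X1 n1 \<theta> x)
                   = canonical_differential J X0 n0 X1 n1 \<theta> (g x)))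
       \<and> (\<forall>g. operator_on J g \<and> bij g
            \<and> g ` X0 = X0 \<and> (\<forall>x\<in>X0. n0 (g x) = n0 x)
            \<and> g ` X1 = X1 \<and> (\<forall>x\<in>X1. n1 (g x) = n1 x)
          \<longrightarrow> (\<forall>x\<in>interp_space J X0 n0 X1 n1 \<theta>.
                 g (canonical_differential J X0 n0 X1 n1 \<theta> x)
                   = canonical_differential J X0 n0 X1 n1 \<theta> (g x)))"
proof (intro conjI allI impI ballI; elim conjE)
  fix g x
  assume "operator_on J g" "\<forall>x\<in>X0. g x \<in> X0 \<and> n0 (g x) \<le> n0 x" "\<forall>x\<in>X1. g x \<in> X1 \<and> n1 (g x) \<le> n1 x"
    and "\<forall>x\<in>interp_space J X0 n0 X1 n1 \<theta>. g x \<in> interp_space J X0 n0 X1 n1 \<theta>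
           \<and> interp_norm J X0 n0 X1 n1 \<theta> (g x) = interp_norm J X0 n0 X1 n1 \<theta> x"
    and "x \<in> interp_space J X0 n0 X1 n1 \<theta>"
  then show "g (canonical_differential J X0 n0 X1 n1 \<theta> x) = canonical_differential J X0 n0 X1 n1 \<theta> (g x)"
    using canonical_differential_compose_contraction[OF opt th] by blast
next
  fix g x
  assume g: "operator_on J g" "bij g" "g ` X0 = X0" "\<forall>x\<in>X0. n0 (g x) = n0 x"
    "g ` X1 = X1" "\<forall>x\<in>X1. n1 (g x) = n1 x" and x: "x \<in> interp_space J X0 n0 X1 n1 \<theta>"
  have pair: "regular_interpolation_pair J X0 n0 X1 n1" using opt unfolding optimal_pair_def by blast
  have "\<forall>x\<in>X0. g x \<in> X0 \<and> n0 (g x) \<le> n0 x" "\<forall>x\<in>X1. g x \<in> X1 \<and> n1 (g x) \<le> n1 x"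
    using g(3-6) by (blast intro: eq_refl)+
  with interp_space_surjective_isometry[OF pair g x]
  show "g (canonical_differential J X0 n0 X1 n1 \<theta> x) = canonical_differential J X0 n0 X1 n1 \<theta> (g x)"
    by (intro canonical_differential_compose_contraction[OF opt th g(1) _ _ x])
qed

end
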